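(* Let $(X,d_X)$ be a compact metric space, let $0<\gamma<1$, let $(\phi_j)_{j\in\mathbb{N}}$ be maps $\phi_j:X\to X$ with $d_X(\phi_j(x_1),\phi_j(x_2))\le \gamma\, d_X(x_1,x_2)$ for all $j\in\mathbb{N}$ and $x_1,x_2\in X$, and let $(q_j)_{j\in\mathbb{N}}$ be real numbers with $q_j\le 0$ and $\sup_j q_j=0$. Define $M_{\phi,q}:I(X)\to I(X)$ by $$M_{\phi,q}(\mu)(f):=\sup_{j\in\mathbb{N}}\big(q_j+\mu(f\circ\phi_j)\big),\qquad f\in C(X,\mathbb{R}).$$ Let $\tau\in(\gamma,1)$. Then $\operatorname{Lip}(M_{\phi,q})\le \gamma/\tau<1$ with respect to the metric $\tilde d_{\gamma,\tau}$ on $I(X)$; that is, $M_{\phi,q}$ is a Banach contraction for $\tilde d_{\gamma,\tau}$. Consequently there exists a unique $\nu\in I(X)$ with $M_{\phi,q}(\nu)=\nu$, and for every $\mu\in I(X)$ the iterates $M_{\phi,q}^n(\mu)$ converge to $\nu$ with respect to $\tilde d_{\gamma,\tau}$.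
   Context: $C(X,\mathbb{R})$ is the set of continuous real functions on $X$. $I(X)$ is the set of functionals $m:C(X,\mathbb{R})\to\mathbb{R}$ satisfying $m(a+f)=a+m(f)$ for all $a\in\mathbb{R}$, $m(\max(f,g))=\max(m(f),m(g))$, and $m(0)=0$ (idempotent probabilities). (That $M_{\phi,q}(\mu)\in I(X)$ for $\mu\in I(X)$ is part of the setting.) For $a>0$ and $\mu,\nu\in I(X)$ let $d_a(\mu,\nu)=\sup\{|\mu(g)-\nu(g)| : g:X\to\mathbb{R},\ \operatorname{Lip}(g)\le a\}$. For $\beta,\tau\in(0,1)$ define $\tilde d_{\beta,\tau}(\mu,\nu):=\sum_{i\in\mathbb{Z}}\frac{\tau^{|i|}}{\beta^i}\, d_{\beta^i}(\mu,\nu)$; this is a metric on $I(X)$ generating the topology of pointwise convergence on $C(X,\mathbb{R})$. *)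

theory Defs
  imports "HOL-Analysis.Analysis"
begin

text \<open>The compact metric space X is the whole (nonempty) type 'a, assumed compact.
  C(X,R) is the set of functions f :: 'a => real with continuous_on UNIV f.
  A functional on C(X,R) is represented by m :: ('a => real) => real, normalised
  by the convention m f = 0 for non-continuous f, so that equality of functionals
  on C(X,R) is equality in HOL.\<close>

definition idem_prob :: "(('a::metric_space \<Rightarrow> real) \<Rightarrow> real) set" where
  "idem_prob = {m.
     (\<forall>a f. continuous_on UNIV f \<longrightarrow> m (\<lambda>x. a + f x) = a + m f) \<and>
     (\<forall>f g. continuous_on UNIV f \<longrightarrow> continuous_on UNIV g \<longrightarrow>
        m (\<lambda>x. max (f x) (g x)) = max (m f) (m g)) \<and>
     m (\<lambda>x. 0) = 0 \<and>
     (\<forall>f. \<not> continuous_on UNIV f \<longrightarrow> m f = 0)}"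

definition M_op :: "(nat \<Rightarrow> 'a::metric_space \<Rightarrow> 'a) \<Rightarrow> (nat \<Rightarrow> real)
    \<Rightarrow> (('a \<Rightarrow> real) \<Rightarrow> real) \<Rightarrow> (('a \<Rightarrow> real) \<Rightarrow> real)" where
  "M_op \<phi> q \<mu> = (\<lambda>f. if continuous_on UNIV f
                        then (SUP j. q j + \<mu> (f \<circ> \<phi> j)) else 0)"

definition d_lip :: "real \<Rightarrow> (('a::metric_space \<Rightarrow> real) \<Rightarrow> real)
    \<Rightarrow> (('a \<Rightarrow> real) \<Rightarrow> real) \<Rightarrow> real" where
  "d_lip a \<mu> \<nu> = Sup {\<bar>\<mu> g - \<nu> g\<bar> | g. a-lipschitz_on UNIV g}"

definition d_tilde :: "real \<Rightarrow> real \<Rightarrow> (('a::metric_space \<Rightarrow> real) \<Rightarrow> real)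
    \<Rightarrow> (('a \<Rightarrow> real) \<Rightarrow> real) \<Rightarrow> real" where
  "d_tilde \<beta> \<tau> \<mu> \<nu> =
     (\<Sum>\<^sub>\<infinity>i\<in>(UNIV::int set). \<tau> ^ nat \<bar>i\<bar> / \<beta> powi i * d_lip (\<beta> powi i) \<mu> \<nu>)"

end

theory Submission
  imports Defs
begin

text \<open>
  Composing an \<open>a\<close>-Lipschitz test function with a \<open>\<gamma>\<close>-contraction \<open>\<phi>\<^sub>j\<close> gives a
  \<open>\<gamma>a\<close>-Lipschitz one, and a supremum of shifted values moves by at most the largest
  shift, so \<open>d\<^sub>a(M \<mu>, M \<nu>) \<le> d\<^sub>\<gamma>\<^sub>a(\<mu>, \<nu>)\<close>. In the weighted sum defining
  \<open>d\<^sub>\<gamma>\<^sub>,\<^sub>\<tau>\<close> this is the index shift \<open>i \<mapsto> i + 1\<close>, which costs the factor \<open>\<gamma>/\<tau>\<close>.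
  Since Lipschitz functions are uniformly dense in \<open>C(X)\<close>, the metric separates points,
  and uniqueness of the fixed point and convergence of the iterates follow as in Banach's
  theorem. Completeness of \<open>I(X)\<close> is avoided by writing the fixed point down:
  \<open>\<nu>(f) = sup\<^sub>w (\<Sum>\<^sub>k q\<^sub>w\<^sub>_\<^sub>k + f(\<pi> w))\<close> over all words \<open>w\<close> with summable weights, where
  \<open>\<pi> w\<close> is the limit of \<open>\<phi>\<^sub>w\<^sub>0 \<circ> \<dots> \<circ> \<phi>\<^sub>w\<^sub>n\<close>; prepending a letter \<open>j\<close> to \<open>w\<close> adds \<open>q\<^sub>j\<close>
  to the weight and applies \<open>\<phi>\<^sub>j\<close> to \<open>\<pi> w\<close>, which is exactly the invariance \<open>M \<nu> = \<nu>\<close>.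
\<close>

section \<open>Idempotent probability measures\<close>

lemma idem_prob_add_const:
  "m \<in> idem_prob \<Longrightarrow> continuous_on UNIV f \<Longrightarrow> m (\<lambda>x. a + f x) = a + m f"
  by (simp add: idem_prob_def)

lemma idem_prob_max:
  "m \<in> idem_prob \<Longrightarrow> continuous_on UNIV f \<Longrightarrow> continuous_on UNIV g \<Longrightarrow>
    m (\<lambda>x. max (f x) (g x)) = max (m f) (m g)"
  by (simp add: idem_prob_def)

lemma idem_prob_const: "m \<in> idem_prob \<Longrightarrow> m (\<lambda>x. c) = c"
  using idem_prob_add_const[of m "\<lambda>x. 0" c] by (simp add: idem_prob_def)

lemma idem_prob_eqI:
  assumes "\<mu> \<in> idem_prob" "\<nu> \<in> idem_prob" "\<And>f. continuous_on UNIV f \<Longrightarrow> \<mu> f = \<nu> f"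
  shows "\<mu> = \<nu>"
proof
  fix f
  show "\<mu> f = \<nu> f"
    using assms by (cases "continuous_on UNIV f") (auto simp: idem_prob_def)
qed

lemma idem_prob_mono:
  assumes "m \<in> idem_prob" "continuous_on UNIV f" "continuous_on UNIV g" "\<And>x. f x \<le> g x"
  shows "m f \<le> m g"
proof -
  have "(\<lambda>x. max (f x) (g x)) = g"
    using assms(4) by (simp add: max_absorb2)
  then show ?thesis
    using idem_prob_max[OF assms(1-3)] by (metis max.cobounded1)
qed

lemma idem_prob_le_const:
  "m \<in> idem_prob \<Longrightarrow> continuous_on UNIV f \<Longrightarrow> (\<And>x. f x \<le> c) \<Longrightarrow> m f \<le> c"
  using idem_prob_mono[of m f "\<lambda>x. c"] idem_prob_const[of m c] by simp

lemma idem_prob_const_le: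
  "m \<in> idem_prob \<Longrightarrow> continuous_on UNIV f \<Longrightarrow> (\<And>x. c \<le> f x) \<Longrightarrow> c \<le> m f"
  using idem_prob_mono[of m "\<lambda>x. c" f] idem_prob_const[of m c] by simp

lemma idem_prob_abs_diff_le:
  assumes "m \<in> idem_prob" "continuous_on UNIV f" "continuous_on UNIV g"
    and "\<And>x. \<bar>f x - g x\<bar> \<le> e"
  shows "\<bar>m f - m g\<bar> \<le> e"
proof -
  have fg: "f x \<le> e + g x" "g x \<le> e + f x" for x
    using assms(4)[of x] by (simp_all add: abs_le_iff)
  have "m f \<le> m (\<lambda>x. e + g x)"
    by (rule idem_prob_mono[OF assms(1,2) continuous_on_add[OF continuous_on_const assms(3)] fg(1)])
  moreover have "m g \<le> m (\<lambda>x. e + f x)"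
    by (rule idem_prob_mono[OF assms(1,3) continuous_on_add[OF continuous_on_const assms(2)] fg(2)])
  ultimately show ?thesis
    using assms(1-3) by (simp add: idem_prob_add_const abs_le_iff)
qed

lemma compact_space_continuous_bounded:
  fixes f :: "'a::metric_space \<Rightarrow> real"
  assumes "compact (UNIV :: 'a set)" "continuous_on UNIV f"
  obtains B where "\<And>x. \<bar>f x\<bar> \<le> B"
proof -
  have "bounded (range f)"
    using compact_continuous_image[OF assms(2,1)] by (rule compact_imp_bounded)
  then obtain B where "\<forall>y\<in>range f. norm y \<le> B"
    unfolding bounded_iff by blast
  then show ?thesis
    using that by auto
qed

lemma abs_cSUP_diff_le:
  fixes f g :: "'i \<Rightarrow> real"
  assumes "I \<noteq> {}" "bdd_above (f ` I)" "bdd_above (g ` I)"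
    and "\<And>i. i \<in> I \<Longrightarrow> \<bar>f i - g i\<bar> \<le> e"
  shows "\<bar>(SUP i\<in>I. f i) - (SUP i\<in>I. g i)\<bar> \<le> e"
proof -
  have "(SUP i\<in>I. f i) \<le> (SUP i\<in>I. g i) + e"
  proof (rule cSUP_least[OF assms(1)])
    fix i assume "i \<in> I"
    then show "f i \<le> (SUP i\<in>I. g i) + e"
      using assms(4)[of i] cSUP_upper[OF _ assms(3), of i] by (simp add: abs_le_iff)
  qed
  moreover have "(SUP i\<in>I. g i) \<le> (SUP i\<in>I. f i) + e"
  proof (rule cSUP_least[OF assms(1)])
    fix i assume "i \<in> I"
    then show "g i \<le> (SUP i\<in>I. f i) + e"
      using assms(4)[of i] cSUP_upper[OF _ assms(2), of i] by (simp add: abs_le_iff)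
  qed
  ultimately show ?thesis
    by (simp add: abs_le_iff)
qed

definition idem_dirac :: "'a::metric_space \<Rightarrow> ('a \<Rightarrow> real) \<Rightarrow> real" where
  "idem_dirac x f = (if continuous_on UNIV f then f x else 0)"

definition idem_pushforward :: "('a::metric_space \<Rightarrow> 'b::metric_space)
    \<Rightarrow> (('a \<Rightarrow> real) \<Rightarrow> real) \<Rightarrow> ('b \<Rightarrow> real) \<Rightarrow> real" where
  "idem_pushforward h \<mu> f = (if continuous_on UNIV f then \<mu> (f \<circ> h) else 0)"

text \<open>The idempotent mixture \<open>\<Oplus>\<^sub>i\<^sub>\<in>\<^sub>I c\<^sub>i \<odot> m\<^sub>i\<close>, the max-plus analogue of a convex combination.\<close>

definition idem_sup :: "'i set \<Rightarrow> ('i \<Rightarrow> real) \<Rightarrow> ('i \<Rightarrow> ('a::metric_space \<Rightarrow> real) \<Rightarrow> real)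
    \<Rightarrow> ('a \<Rightarrow> real) \<Rightarrow> real" where
  "idem_sup I c m f = (if continuous_on UNIV f then SUP i\<in>I. c i + m i f else 0)"

lemma idem_dirac_in_idem_prob: "idem_dirac x \<in> idem_prob"
  unfolding idem_prob_def idem_dirac_def
  by (simp add: continuous_on_add continuous_on_max)

lemma idem_pushforward_in_idem_prob:
  assumes "continuous_on UNIV h" "\<mu> \<in> idem_prob"
  shows "idem_pushforward h \<mu> \<in> idem_prob"
proof -
  have comp: "continuous_on UNIV (\<lambda>x. f (h x))" if "continuous_on UNIV f" for f :: "'b \<Rightarrow> real"
    using that assms(1) subset_UNIV by (rule continuous_on_compose2)
  show ?thesis
    using assms(2) comp
    by (simp add: idem_prob_def idem_pushforward_def o_def continuous_on_add continuous_on_max)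
qed

lemma idem_sup_bdd_above:
  fixes f :: "'a::metric_space \<Rightarrow> real"
  assumes "compact (UNIV :: 'a set)" "continuous_on UNIV f"
    and "\<And>i. i \<in> I \<Longrightarrow> c i \<le> 0" "\<And>i. i \<in> I \<Longrightarrow> m i \<in> idem_prob"
  shows "bdd_above ((\<lambda>i. c i + m i f) ` I)"
proof -
  obtain B where B: "\<And>x. \<bar>f x\<bar> \<le> B"
    using compact_space_continuous_bounded[OF assms(1,2)] by blast
  have "c i + m i f \<le> B" if "i \<in> I" for i
    using assms(3)[OF that] idem_prob_le_const[OF assms(4)[OF that] assms(2), of B] B
    by (force simp: abs_le_iff)
  then show ?thesis
    by (rule bdd_aboveI2)
qed

lemma idem_sup_in_idem_prob:
  fixes m :: "'i \<Rightarrow> ('a::metric_space \<Rightarrow> real) \<Rightarrow> real"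
  assumes "compact (UNIV :: 'a set)" "I \<noteq> {}"
    and "\<And>i. i \<in> I \<Longrightarrow> c i \<le> 0" "(SUP i\<in>I. c i) = 0"
    and "\<And>i. i \<in> I \<Longrightarrow> m i \<in> idem_prob"
  shows "idem_sup I c m \<in> idem_prob"
  unfolding idem_prob_def mem_Collect_eq
proof (intro conjI allI impI)
  note bdd = idem_sup_bdd_above[OF assms(1) _ assms(3,5)]
  fix a and f :: "'a \<Rightarrow> real"
  assume f: "continuous_on UNIV f"
  have "(SUP i\<in>I. c i + m i (\<lambda>x. a + f x)) = (SUP i\<in>I. a + (c i + m i f))"
    using assms(5) f by (simp add: idem_prob_add_const algebra_simps)
  also have "\<dots> = a + (SUP i\<in>I. c i + m i f)"
    using bdd[OF f] assms(2) by (rule Sup_add_eq)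
  finally show "idem_sup I c m (\<lambda>x. a + f x) = a + idem_sup I c m f"
    using f by (simp add: idem_sup_def continuous_on_add)
next
  note bdd = idem_sup_bdd_above[OF assms(1) _ assms(3,5)]
  fix f g :: "'a \<Rightarrow> real"
  assume f: "continuous_on UNIV f" and g: "continuous_on UNIV g"
  have "(SUP i\<in>I. c i + m i (\<lambda>x. max (f x) (g x)))
      = (SUP i\<in>I. max (c i + m i f) (c i + m i g))"
    using assms(5) f g by (simp add: idem_prob_max max_add_distrib_right)
  also have "\<dots> = max (SUP i\<in>I. c i + m i f) (SUP i\<in>I. c i + m i g)"
    using SUP_sup_distrib[OF assms(2) bdd[OF f] bdd[OF g]] by (simp add: sup_max)
  finally show "idem_sup I c m (\<lambda>x. max (f x) (g x)) = max (idem_sup I c m f) (idem_sup I c m g)"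
    using f g by (simp add: idem_sup_def continuous_on_max)
next
  show "idem_sup I c m (\<lambda>x. 0) = 0"
    using assms(4,5) by (simp add: idem_sup_def idem_prob_const)
qed (simp add: idem_sup_def)

section \<open>The distances \<open>d\<^sub>a\<close>\<close>

lemma d_lip_le:
  fixes \<mu> \<nu> :: "('a::metric_space \<Rightarrow> real) \<Rightarrow> real"
  assumes "0 \<le> a" "\<And>g. a-lipschitz_on UNIV g \<Longrightarrow> \<bar>\<mu> g - \<nu> g\<bar> \<le> C"
  shows "d_lip a \<mu> \<nu> \<le> C"
  unfolding d_lip_def
proof (rule cSup_least)
  have "a-lipschitz_on UNIV (\<lambda>x::'a. 0::real)"
    using lipschitz_on_constant assms(1) by (rule lipschitz_on_le)
  then show "{\<bar>\<mu> g - \<nu> g\<bar> |g. a-lipschitz_on UNIV g} \<noteq> {}"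
    by blast
qed (use assms(2) in blast)

lemma idem_prob_lipschitz_abs_diff_le:
  fixes \<mu> \<nu> :: "('a::metric_space \<Rightarrow> real) \<Rightarrow> real"
  assumes "bounded (UNIV :: 'a set)" "\<mu> \<in> idem_prob" "\<nu> \<in> idem_prob" "a-lipschitz_on UNIV g"
  shows "\<bar>\<mu> g - \<nu> g\<bar> \<le> 2 * a * diameter (UNIV :: 'a set)"
proof -
  define c D where "c = g undefined" and "D = diameter (UNIV :: 'a set)"
  have g: "continuous_on UNIV g"
    using assms(4) by (rule lipschitz_on_continuous_on)
  have dev: "\<bar>g x - c\<bar> \<le> a * D" for x
  proof -
    have "\<bar>g x - c\<bar> \<le> a * dist x undefined"
      using lipschitz_onD[OF assms(4)] by (simp add: c_def dist_real_def)
    also have "\<dots> \<le> a * D"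
      using diameter_bounded_bound[OF assms(1)] lipschitz_on_nonneg[OF assms(4)]
      by (simp add: D_def mult_left_mono)
    finally show ?thesis .
  qed
  have lower: "c - a * D \<le> g x" and upper: "g x \<le> c + a * D" for x
    using dev[of x] by (simp_all add: abs_le_iff)
  have "c - a * D \<le> m g \<and> m g \<le> c + a * D" if "m \<in> idem_prob" for m
    using idem_prob_const_le[OF that g lower] idem_prob_le_const[OF that g upper] by simp
  from this[OF assms(2)] this[OF assms(3)] show ?thesis
    by (simp add: D_def abs_le_iff)
qed

lemma abs_diff_le_d_lip:
  fixes \<mu> \<nu> :: "('a::metric_space \<Rightarrow> real) \<Rightarrow> real"
  assumes "bounded (UNIV :: 'a set)" "\<mu> \<in> idem_prob" "\<nu> \<in> idem_prob" "a-lipschitz_on UNIV g"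
  shows "\<bar>\<mu> g - \<nu> g\<bar> \<le> d_lip a \<mu> \<nu>"
  unfolding d_lip_def
proof (rule cSup_upper)
  show "bdd_above {\<bar>\<mu> g - \<nu> g\<bar> |g. a-lipschitz_on UNIV g}"
    using idem_prob_lipschitz_abs_diff_le[OF assms(1-3)]
    by (intro bdd_aboveI[where M = "2 * a * diameter (UNIV :: 'a set)"]) blast
qed (use assms(4) in blast)

lemma d_lip_nonneg:
  fixes \<mu> \<nu> :: "('a::metric_space \<Rightarrow> real) \<Rightarrow> real"
  assumes "bounded (UNIV :: 'a set)" "\<mu> \<in> idem_prob" "\<nu> \<in> idem_prob" "0 \<le> a"
  shows "0 \<le> d_lip a \<mu> \<nu>"
proof -
  have "a-lipschitz_on UNIV (\<lambda>x::'a. 0::real)"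
    using lipschitz_on_constant assms(4) by (rule lipschitz_on_le)
  from abs_diff_le_d_lip[OF assms(1-3) this] show ?thesis
    by simp
qed

lemma d_lip_le_diameter:
  fixes \<mu> \<nu> :: "('a::metric_space \<Rightarrow> real) \<Rightarrow> real"
  assumes "bounded (UNIV :: 'a set)" "\<mu> \<in> idem_prob" "\<nu> \<in> idem_prob" "0 \<le> a"
  shows "d_lip a \<mu> \<nu> \<le> 2 * a * diameter (UNIV :: 'a set)"
  using assms(4) idem_prob_lipschitz_abs_diff_le[OF assms(1-3)] by (rule d_lip_le)

lemma inf_convolution_lipschitz:
  fixes f :: "'a::metric_space \<Rightarrow> real"
  assumes "\<And>x. B \<le> f x" "0 \<le> L"
  shows "L-lipschitz_on UNIV (\<lambda>x. INF y. f y + L * dist x y)"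
proof (rule lipschitz_onI[OF _ assms(2)])
  define g where "g x = (INF y. f y + L * dist x y)" for x
  have bdd: "bdd_below (range (\<lambda>y. f y + L * dist x y))" for x
    using assms by (intro bdd_belowI2[where m = B]) (simp add: add_increasing2)
  have half: "g x \<le> g x' + L * dist x x'" for x x'
  proof -
    have "g x - L * dist x x' \<le> f y + L * dist x' y" for y
    proof -
      have "g x \<le> f y + L * dist x y"
        unfolding g_def by (rule cINF_lower[OF bdd]) simp
      also have "\<dots> \<le> f y + L * dist x' y + L * dist x x'"
        using mult_left_mono[OF dist_triangle[of x y x'] assms(2)]
        by (simp add: distrib_left dist_commute)
      finally show ?thesis by simp
    qed
    then have "g x - L * dist x x' \<le> g x'"
      unfolding g_def[of x'] by (intro cINF_greatest) auto
    then show ?thesis by simp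
  qed
  show "dist (g x) (g x') \<le> L * dist x x'" for x x'
  proof -
    have "g x \<le> g x' + L * dist x x'" "g x' \<le> g x + L * dist x x'"
      using half[of x x'] half[of x' x] by (simp_all add: dist_commute)
    then show ?thesis
      by (simp only: dist_real_def abs_le_iff) linarith
  qed
qed

lemma lipschitz_approximation:
  fixes f :: "'a::metric_space \<Rightarrow> real"
  assumes "uniformly_continuous_on UNIV f" "\<And>x. \<bar>f x\<bar> \<le> B" "0 < e"
  obtains L g where "L-lipschitz_on UNIV g" "\<And>x. \<bar>f x - g x\<bar> \<le> e"
proof -
  obtain \<delta> where \<delta>: "0 < \<delta>" and uc: "\<And>x y. dist y x < \<delta> \<Longrightarrow> dist (f y) (f x) < e"
    using assms(1,3) unfolding uniformly_continuous_on_def by blast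
  define L where "L = 2 * B / \<delta>"
  have B: "0 \<le> B"
    using assms(2)[of undefined] by simp
  then have L: "0 \<le> L" "2 * B \<le> L * \<delta>"
    using \<delta> by (simp_all add: L_def)
  define g where "g x = (INF y. f y + L * dist x y)" for x
  have f_lower: "- B \<le> f x" for x
    using assms(2)[of x] by simp
  have bdd: "bdd_below (range (\<lambda>y. f y + L * dist x y))" for x
    using f_lower L(1) by (intro bdd_belowI2[where m = "- B"] add_increasing2) simp_all
  have close: "f x - e \<le> g x \<and> g x \<le> f x" for x
  proof
    have "f x - e \<le> f y + L * dist x y" for y
    proof (cases "dist y x < \<delta>")
      case True
      then show ?thesis
        using uc[of y x] L(1) by (simp add: dist_real_def abs_less_iff add_increasing2)
    next
      case False
      then have "2 * B \<le> L * dist x y"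
        using L mult_left_mono[of \<delta> "dist x y" L] by (simp add: dist_commute)
      then show ?thesis
        using assms(2)[of x] assms(2)[of y] assms(3) by (simp add: abs_le_iff)
    qed
    then show "f x - e \<le> g x"
      unfolding g_def by (intro cINF_greatest) auto
    show "g x \<le> f x"
      using cINF_lower[OF bdd[of x], of x] by (simp add: g_def)
  qed
  have "L-lipschitz_on UNIV g"
    unfolding g_def using f_lower L(1) by (rule inf_convolution_lipschitz)
  moreover have "\<bar>f x - g x\<bar> \<le> e" for x
    using close[of x] by (simp add: abs_le_iff)
  ultimately show ?thesis
    by (rule that)
qed

lemma idem_prob_eqI_d_lip:
  fixes \<mu> \<nu> :: "('a::metric_space \<Rightarrow> real) \<Rightarrow> real"
  assumes X: "compact (UNIV :: 'a set)" and "\<mu> \<in> idem_prob" "\<nu> \<in> idem_prob"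
    and "\<And>L. \<exists>a\<ge>L. d_lip a \<mu> \<nu> = 0"
  shows "\<mu> = \<nu>"
proof (rule idem_prob_eqI[OF assms(2,3)])
  fix f :: "'a \<Rightarrow> real"
  assume f: "continuous_on UNIV f"
  obtain B where B: "\<And>x. \<bar>f x\<bar> \<le> B"
    using compact_space_continuous_bounded[OF X f] by blast
  have approx: "\<bar>\<mu> f - \<nu> f\<bar> \<le> 2 * e" if e: "0 < e" for e
  proof -
    obtain L g where g: "L-lipschitz_on UNIV g" and close: "\<And>x. \<bar>f x - g x\<bar> \<le> e"
      using lipschitz_approximation[OF compact_uniformly_continuous[OF f X] B e] by blast
    obtain a where a: "L \<le> a" "d_lip a \<mu> \<nu> = 0"
      using assms(4) by blast
    have lipschitz_part: "\<bar>\<mu> g - \<nu> g\<bar> \<le> 0"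
      using abs_diff_le_d_lip[OF compact_imp_bounded[OF X] assms(2,3) lipschitz_on_le[OF g a(1)]] a(2)
      by simp
    have approx_part: "\<bar>m f - m g\<bar> \<le> e" if "m \<in> idem_prob" for m
      using that f lipschitz_on_continuous_on[OF g] close by (rule idem_prob_abs_diff_le)
    show ?thesis
      using lipschitz_part approx_part[OF assms(2)] approx_part[OF assms(3)] by linarith
  qed
  show "\<mu> f = \<nu> f"
  proof (rule ccontr)
    assume "\<mu> f \<noteq> \<nu> f"
    then show False
      using approx[of "\<bar>\<mu> f - \<nu> f\<bar> / 4"] by simp
  qed
qed

section \<open>The metric \<open>d\<^sub>\<beta>\<^sub>,\<^sub>\<tau>\<close>\<close>

definition d_tilde_summand :: "real \<Rightarrow> real \<Rightarrow> (('a::metric_space \<Rightarrow> real) \<Rightarrow> real)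
    \<Rightarrow> (('a \<Rightarrow> real) \<Rightarrow> real) \<Rightarrow> int \<Rightarrow> real" where
  "d_tilde_summand \<beta> \<tau> \<mu> \<nu> i = \<tau> ^ nat \<bar>i\<bar> / \<beta> powi i * d_lip (\<beta> powi i) \<mu> \<nu>"

lemma d_tilde_eq_infsum: "d_tilde \<beta> \<tau> \<mu> \<nu> = (\<Sum>\<^sub>\<infinity>i. d_tilde_summand \<beta> \<tau> \<mu> \<nu> i)"
  unfolding d_tilde_def d_tilde_summand_def ..

lemma summable_on_power_abs_int:
  fixes \<tau> :: real
  assumes "0 \<le> \<tau>" "\<tau> < 1"
  shows "(\<lambda>i::int. \<tau> ^ nat \<bar>i\<bar>) summable_on UNIV"
proof -
  have geometric: "(\<lambda>n::nat. \<tau> ^ n) summable_on UNIV"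
    using assms by (simp add: summable_on_UNIV_nonneg_real_iff summable_geometric)
  have "(\<lambda>i::int. \<tau> ^ nat \<bar>i\<bar>) summable_on range int"
    using geometric by (simp add: summable_on_reindex o_def)
  moreover have "(\<lambda>i::int. \<tau> ^ nat \<bar>i\<bar>) summable_on range (\<lambda>n. - int n)"
    using geometric by (simp add: summable_on_reindex inj_on_def o_def)
  moreover have "i \<in> range int \<union> range (\<lambda>n. - int n)" for i :: int
  proof (cases "0 \<le> i")
    case True
    then have "i = int (nat i)"
      by simp
    then show ?thesis
      by blast
  next
    case False
    then have "i = - int (nat (- i))"
      by simp
    then show ?thesis
      by blast
  qed
  then have "UNIV = range int \<union> range (\<lambda>n. - int n)"
    by blast
  ultimately show ?thesis
    by (metis summable_on_union)
qed

lemma d_tilde_summand_bounds: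
  fixes \<mu> \<nu> :: "('a::metric_space \<Rightarrow> real) \<Rightarrow> real"
  assumes "bounded (UNIV :: 'a set)" "\<mu> \<in> idem_prob" "\<nu> \<in> idem_prob" "0 < \<beta>" "0 \<le> \<tau>"
  shows "0 \<le> d_tilde_summand \<beta> \<tau> \<mu> \<nu> i"
    and "d_tilde_summand \<beta> \<tau> \<mu> \<nu> i \<le> 2 * diameter (UNIV :: 'a set) * \<tau> ^ nat \<bar>i\<bar>"
proof -
  define b where "b = \<beta> powi i"
  have b: "0 < b"
    using assms(4) by (simp add: b_def)
  have coeff: "0 \<le> \<tau> ^ nat \<bar>i\<bar> / b"
    using assms(5) b by simp
  show "0 \<le> d_tilde_summand \<beta> \<tau> \<mu> \<nu> i"
    unfolding d_tilde_summand_def b_def[symmetric]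
    using coeff d_lip_nonneg[OF assms(1-3), of b] b by (intro mult_nonneg_nonneg) simp_all
  have "d_tilde_summand \<beta> \<tau> \<mu> \<nu> i \<le> \<tau> ^ nat \<bar>i\<bar> / b * (2 * b * diameter (UNIV :: 'a set))"
    unfolding d_tilde_summand_def b_def[symmetric]
    using d_lip_le_diameter[OF assms(1-3), of b] b coeff by (intro mult_left_mono) simp_all
  also have "\<dots> = 2 * diameter (UNIV :: 'a set) * \<tau> ^ nat \<bar>i\<bar>"
    using b by simp
  finally show "d_tilde_summand \<beta> \<tau> \<mu> \<nu> i \<le> 2 * diameter (UNIV :: 'a set) * \<tau> ^ nat \<bar>i\<bar>" .
qed

lemma d_tilde_summable:
  fixes \<mu> \<nu> :: "('a::metric_space \<Rightarrow> real) \<Rightarrow> real"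
  assumes "bounded (UNIV :: 'a set)" "\<mu> \<in> idem_prob" "\<nu> \<in> idem_prob" "0 < \<beta>" "0 \<le> \<tau>" "\<tau> < 1"
  shows "d_tilde_summand \<beta> \<tau> \<mu> \<nu> summable_on UNIV"
proof (rule summable_on_comparison_test)
  show "(\<lambda>i. 2 * diameter (UNIV :: 'a set) * \<tau> ^ nat \<bar>i\<bar>) summable_on UNIV"
    using summable_on_power_abs_int[OF assms(5,6)] by (rule summable_on_cmult_right)
qed (use d_tilde_summand_bounds[OF assms(1-5)] in auto)

lemma d_tilde_nonneg:
  fixes \<mu> \<nu> :: "('a::metric_space \<Rightarrow> real) \<Rightarrow> real"
  assumes "bounded (UNIV :: 'a set)" "\<mu> \<in> idem_prob" "\<nu> \<in> idem_prob" "0 < \<beta>" "0 \<le> \<tau>"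
  shows "0 \<le> d_tilde \<beta> \<tau> \<mu> \<nu>"
  unfolding d_tilde_eq_infsum using d_tilde_summand_bounds(1)[OF assms] by (rule infsum_nonneg)

lemma d_tilde_eq_0_imp_eq:
  fixes \<mu> \<nu> :: "('a::metric_space \<Rightarrow> real) \<Rightarrow> real"
  assumes X: "compact (UNIV :: 'a set)" and \<mu>\<nu>: "\<mu> \<in> idem_prob" "\<nu> \<in> idem_prob"
    and \<beta>: "0 < \<beta>" "\<beta> < 1" and \<tau>: "0 < \<tau>" "\<tau> < 1"
    and zero: "d_tilde \<beta> \<tau> \<mu> \<nu> = 0"
  shows "\<mu> = \<nu>"
proof (rule idem_prob_eqI_d_lip[OF X \<mu>\<nu>])
  note bounded = compact_imp_bounded[OF X]
  have d_lip_zero: "d_lip (\<beta> powi i) \<mu> \<nu> = 0" for i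
  proof -
    have "infsum (d_tilde_summand \<beta> \<tau> \<mu> \<nu>) {i} \<le> infsum (d_tilde_summand \<beta> \<tau> \<mu> \<nu>) UNIV"
      using d_tilde_summable[OF bounded \<mu>\<nu> \<beta>(1) _ \<tau>(2)] d_tilde_summand_bounds(1)[OF bounded \<mu>\<nu> \<beta>(1)] \<tau>(1)
      by (intro infsum_mono2) auto
    then have "d_tilde_summand \<beta> \<tau> \<mu> \<nu> i \<le> 0"
      using zero by (simp add: d_tilde_eq_infsum)
    then have "\<tau> ^ nat \<bar>i\<bar> / \<beta> powi i * d_lip (\<beta> powi i) \<mu> \<nu> \<le> 0"
      by (simp add: d_tilde_summand_def)
    moreover have "0 < \<tau> ^ nat \<bar>i\<bar> / \<beta> powi i"
      using \<beta>(1) \<tau>(1) by simp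
    ultimately have "d_lip (\<beta> powi i) \<mu> \<nu> \<le> 0"
      by (metis mult_le_cancel_left_pos mult_zero_right)
    moreover have "0 \<le> d_lip (\<beta> powi i) \<mu> \<nu>"
      using d_lip_nonneg[OF bounded \<mu>\<nu>] \<beta>(1) by simp
    ultimately show ?thesis
      by simp
  qed
  fix L :: real
  obtain n where "L < (1 / \<beta>) ^ n"
    using real_arch_pow[of "1 / \<beta>"] \<beta> by auto
  moreover have "\<beta> powi (- int n) = (1 / \<beta>) ^ n"
    by (simp add: power_int_minus power_one_over inverse_eq_divide)
  ultimately show "\<exists>a\<ge>L. d_lip a \<mu> \<nu> = 0"
    using d_lip_zero[of "- int n"] by (metis less_eq_real_def)
qed

lemma d_tilde_contraction:
  fixes \<mu> \<nu> \<mu>' \<nu>' :: "('a::metric_space \<Rightarrow> real) \<Rightarrow> real"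
  assumes bounded: "bounded (UNIV :: 'a set)"
    and \<mu>\<nu>: "\<mu> \<in> idem_prob" "\<nu> \<in> idem_prob" and \<mu>'\<nu>': "\<mu>' \<in> idem_prob" "\<nu>' \<in> idem_prob"
    and \<beta>: "0 < \<beta>" and \<tau>: "0 < \<tau>" "\<tau> < 1"
    and scale: "\<And>a. 0 < a \<Longrightarrow> d_lip a \<mu>' \<nu>' \<le> d_lip (\<beta> * a) \<mu> \<nu>"
  shows "d_tilde \<beta> \<tau> \<mu>' \<nu>' \<le> \<beta> / \<tau> * d_tilde \<beta> \<tau> \<mu> \<nu>"
proof -
  let ?s = "d_tilde_summand \<beta> \<tau> \<mu> \<nu>" and ?s' = "d_tilde_summand \<beta> \<tau> \<mu>' \<nu>'"
  have shift: "bij_betw (\<lambda>k::int. k - 1) UNIV UNIV"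
    by (rule bij_betwI[where g = "\<lambda>k. k + 1"]) auto
  have termwise: "?s' (k - 1) \<le> \<beta> / \<tau> * ?s k" for k
  proof -
    define b where "b = \<beta> powi k"
    have b: "0 < b"
      using \<beta> by (simp add: b_def)
    have "\<tau> * \<tau> ^ nat \<bar>k - 1\<bar> \<le> \<tau> ^ nat \<bar>k\<bar>"
      using \<tau> by (subst power_Suc[symmetric], intro power_decreasing) auto
    then have \<tau>_shift: "\<tau> ^ nat \<bar>k - 1\<bar> \<le> \<tau> ^ nat \<bar>k\<bar> / \<tau>"
      using \<tau> by (simp add: field_simps)
    have d: "0 \<le> d_lip b \<mu> \<nu>"
      using d_lip_nonneg[OF bounded \<mu>\<nu>] b by simp
    have "?s' (k - 1) = \<tau> ^ nat \<bar>k - 1\<bar> * \<beta> / b * d_lip (b / \<beta>) \<mu>' \<nu>'"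
      using \<beta> by (simp add: d_tilde_summand_def b_def power_int_diff)
    also have "\<dots> \<le> \<tau> ^ nat \<bar>k - 1\<bar> * \<beta> / b * d_lip b \<mu> \<nu>"
      using scale[of "b / \<beta>"] \<beta> \<tau> b by (intro mult_left_mono) simp_all
    also have "\<dots> \<le> \<tau> ^ nat \<bar>k\<bar> / \<tau> * \<beta> / b * d_lip b \<mu> \<nu>"
      using \<tau>_shift \<beta> b d by (intro mult_right_mono divide_right_mono) simp_all
    also have "\<dots> = \<beta> / \<tau> * ?s k"
      by (simp add: d_tilde_summand_def b_def)
    finally show ?thesis .
  qed
  have "d_tilde \<beta> \<tau> \<mu>' \<nu>' = (\<Sum>\<^sub>\<infinity>k. ?s' (k - 1))"
    unfolding d_tilde_eq_infsum by (rule infsum_reindex_bij_betw[OF shift, of ?s', symmetric])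
  also have "\<dots> \<le> (\<Sum>\<^sub>\<infinity>k. \<beta> / \<tau> * ?s k)"
  proof (rule infsum_mono[OF _ _ termwise])
    show "(\<lambda>k. ?s' (k - 1)) summable_on UNIV"
      using summable_on_reindex_bij_betw[OF shift, of ?s'] d_tilde_summable[OF bounded \<mu>'\<nu>' \<beta>] \<tau> by simp
    show "(\<lambda>k. \<beta> / \<tau> * ?s k) summable_on UNIV"
      using \<tau> by (intro summable_on_cmult_right d_tilde_summable[OF bounded \<mu>\<nu> \<beta>]) simp_all
  qed
  also have "\<dots> = \<beta> / \<tau> * d_tilde \<beta> \<tau> \<mu> \<nu>"
    unfolding d_tilde_eq_infsum by (rule infsum_cmult_right')
  finally show ?thesis .
qed

section \<open>Contractions without completeness\<close>

locale contraction_on =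
  fixes S :: "'x set" and d :: "'x \<Rightarrow> 'x \<Rightarrow> real" and T :: "'x \<Rightarrow> 'x" and k :: real
  assumes maps_into: "x \<in> S \<Longrightarrow> T x \<in> S"
    and nonneg: "x \<in> S \<Longrightarrow> y \<in> S \<Longrightarrow> 0 \<le> d x y"
    and eq_if_zero: "x \<in> S \<Longrightarrow> y \<in> S \<Longrightarrow> d x y = 0 \<Longrightarrow> x = y"
    and contracts: "x \<in> S \<Longrightarrow> y \<in> S \<Longrightarrow> d (T x) (T y) \<le> k * d x y"
    and k: "0 \<le> k" "k < 1"
begin

lemma fixpoint_unique:
  assumes "p \<in> S" "p' \<in> S" "T p = p" "T p' = p'"
  shows "p = p'"
proof (rule eq_if_zero[OF assms(1,2)])
  have "d p p' \<le> k * d p p'"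
    using contracts[OF assms(1,2)] assms(3,4) by simp
  with nonneg[OF assms(1,2)] k show "d p p' = 0"
    by (smt (verit) mult_le_cancel_right1)
qed

lemma iterates_in: "x \<in> S \<Longrightarrow> (T ^^ n) x \<in> S"
  by (induction n) (simp_all add: maps_into)

lemma iterates_dist_le:
  assumes "x \<in> S" "p \<in> S" "T p = p"
  shows "d ((T ^^ n) x) p \<le> k ^ n * d x p"
proof (induction n)
  case (Suc n)
  have "d ((T ^^ Suc n) x) p = d (T ((T ^^ n) x)) (T p)"
    using assms(3) by simp
  also have "\<dots> \<le> k * d ((T ^^ n) x) p"
    using contracts[OF iterates_in[OF assms(1)] assms(2)] .
  also have "\<dots> \<le> k * (k ^ n * d x p)"
    using Suc k by (intro mult_left_mono) simp_all
  finally show ?case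
    by simp
qed simp

lemma iterates_tendsto_fixpoint:
  assumes "x \<in> S" "p \<in> S" "T p = p"
  shows "(\<lambda>n. d ((T ^^ n) x) p) \<longlonglongrightarrow> 0"
proof (rule tendsto_sandwich[of "\<lambda>n. 0" _ _ "\<lambda>n. k ^ n * d x p"])
  show "\<forall>\<^sub>F n in sequentially. 0 \<le> d ((T ^^ n) x) p"
    using nonneg[OF iterates_in[OF assms(1)] assms(2)] by simp
  show "\<forall>\<^sub>F n in sequentially. d ((T ^^ n) x) p \<le> k ^ n * d x p"
    using iterates_dist_le[OF assms] by simp
  show "(\<lambda>n. k ^ n * d x p) \<longlonglongrightarrow> 0"
    using k by (simp add: LIMSEQ_power_zero tendsto_mult_left_zero)
qed simp

end

section \<open>The coding map and the invariant measure\<close>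

primrec comp_word :: "(nat \<Rightarrow> 'a \<Rightarrow> 'a) \<Rightarrow> (nat \<Rightarrow> nat) \<Rightarrow> nat \<Rightarrow> 'a \<Rightarrow> 'a" where
  "comp_word \<phi> w 0 x = x"
| "comp_word \<phi> w (Suc n) x = \<phi> (w 0) (comp_word \<phi> (\<lambda>k. w (Suc k)) n x)"

lemma comp_word_add:
  "comp_word \<phi> w (n + m) x = comp_word \<phi> w n (comp_word \<phi> (\<lambda>k. w (k + n)) m x)"
  by (induction n arbitrary: w) simp_all

text \<open>Any starting point in place of \<open>undefined\<close> gives the same limit, by \<open>comp_word_dist_le\<close>.\<close>

definition coding_map :: "(nat \<Rightarrow> 'a::metric_space \<Rightarrow> 'a) \<Rightarrow> (nat \<Rightarrow> nat) \<Rightarrow> 'a" where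
  "coding_map \<phi> w = lim (\<lambda>n. comp_word \<phi> w n undefined)"

definition summable_words :: "(nat \<Rightarrow> real) \<Rightarrow> (nat \<Rightarrow> nat) set" where
  "summable_words q = {w. summable (\<lambda>k. q (w k))}"

definition word_weight :: "(nat \<Rightarrow> real) \<Rightarrow> (nat \<Rightarrow> nat) \<Rightarrow> real" where
  "word_weight q w = (\<Sum>k. q (w k))"

lemma case_nat_in_summable_words:
  "w \<in> summable_words q \<Longrightarrow> case_nat j w \<in> summable_words q"
  unfolding summable_words_def using summable_Suc_iff[of "\<lambda>k. q (case_nat j w k)"] by simp

lemma word_weight_case_nat:
  assumes "w \<in> summable_words q"
  shows "word_weight q (case_nat j w) = q j + word_weight q w"
  using suminf_split_head[of "\<lambda>k. q (case_nat j w k)"] case_nat_in_summable_words[OF assms]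
  by (simp add: word_weight_def summable_words_def)

lemma summable_words_eq_UN: "summable_words q = (\<Union>j. case_nat j ` summable_words q)"
proof (intro equalityI subsetI)
  fix w assume w: "w \<in> summable_words q"
  have "w = case_nat (w 0) (\<lambda>k. w (Suc k))"
    by (rule ext) (simp split: nat.split)
  moreover have "(\<lambda>k. w (Suc k)) \<in> summable_words q"
    using w summable_Suc_iff[of "\<lambda>k. q (w k)"] by (simp add: summable_words_def)
  ultimately show "w \<in> (\<Union>j. case_nat j ` summable_words q)"
    by blast
qed (auto intro: case_nat_in_summable_words)

lemma word_weight_nonpos:
  "(\<And>j. q j \<le> 0) \<Longrightarrow> w \<in> summable_words q \<Longrightarrow> word_weight q w \<le> 0"
  unfolding word_weight_def summable_words_def using suminf_le[of "\<lambda>k. q (w k)" "\<lambda>k. 0"] by simp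

lemma exists_word_weight_ge:
  assumes q_nonpos: "\<And>j. q j \<le> 0" and q_sup: "(SUP j. q j) = 0" and e: "0 < e"
  shows "\<exists>w\<in>summable_words q. - e \<le> word_weight q w"
proof -
  have "\<exists>j. - (e * (1/2) ^ Suc k) < q j" for k
  proof -
    have "bdd_above (range q)"
      using q_nonpos by (intro bdd_aboveI2)
    moreover have "- (e * (1/2) ^ Suc k) < (SUP j. q j)"
      using q_sup e by simp
    ultimately show ?thesis
      using less_cSUP_iff[of UNIV q] by auto
  qed
  then obtain w where w: "\<And>k. - (e * (1/2) ^ Suc k) < q (w k)"
    by metis
  have geometric: "(\<lambda>k. - (e * (1/2) ^ Suc k)) sums - e"
    using sums_minus[OF sums_mult[OF power_half_series, of e]] by simp
  have "summable (\<lambda>k. q (w k))"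
  proof (rule summable_comparison_test')
    show "summable (\<lambda>k. e * (1/2::real) ^ Suc k)"
      using sums_mult[OF power_half_series, of e] by (rule sums_summable)
    show "norm (q (w k)) \<le> e * (1/2) ^ Suc k" for k
      using w[of k] q_nonpos[of "w k"] by simp
  qed
  moreover have "- e \<le> word_weight q w"
    unfolding word_weight_def sums_unique[OF geometric]
    using w geometric \<open>summable (\<lambda>k. q (w k))\<close>
    by (intro suminf_le) (auto intro: less_imp_le sums_summable)
  ultimately show ?thesis
    by (auto simp: summable_words_def)
qed

lemma SUP_word_weight:
  assumes "\<And>j. q j \<le> 0" "(SUP j. q j) = 0"
  shows "summable_words q \<noteq> {}" and "(SUP w\<in>summable_words q. word_weight q w) = 0"
proof -
  show nonempty: "summable_words q \<noteq> {}"
    using exists_word_weight_ge[OF assms, of 1] by auto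
  show "(SUP w\<in>summable_words q. word_weight q w) = 0"
  proof (rule antisym)
    show "(SUP w\<in>summable_words q. word_weight q w) \<le> 0"
      using nonempty word_weight_nonpos[OF assms(1)] by (intro cSUP_least) auto
    have bdd: "bdd_above (word_weight q ` summable_words q)"
      using word_weight_nonpos[OF assms(1)] by (intro bdd_aboveI2)
    show "0 \<le> (SUP w\<in>summable_words q. word_weight q w)"
    proof (rule field_le_epsilon)
      fix e :: real assume "0 < e"
      then obtain w where "w \<in> summable_words q" "- e \<le> word_weight q w"
        using exists_word_weight_ge[OF assms] by blast
      then show "0 \<le> (SUP w\<in>summable_words q. word_weight q w) + e"
        using cSUP_upper[OF _ bdd, of w] by simp
    qed
  qed
qed

lemma SUP_case_nat_summable_words:
  fixes h :: "(nat \<Rightarrow> nat) \<Rightarrow> real"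
  assumes "summable_words q \<noteq> {}" "\<And>w. w \<in> summable_words q \<Longrightarrow> h w \<le> B"
  shows "(SUP j. SUP w\<in>summable_words q. h (case_nat j w)) = (SUP w\<in>summable_words q. h w)"
proof -
  have "bdd_above (\<Union>j. h ` case_nat j ` summable_words q)"
    by (rule bdd_aboveI[where M = B]) (auto intro: assms(2) case_nat_in_summable_words)
  then have "(SUP w\<in>(\<Union>j. case_nat j ` summable_words q). h w)
      = (SUP j. SUP w\<in>case_nat j ` summable_words q. h w)"
    using assms(1) by (intro cSUP_UNION) auto
  then show ?thesis
    by (simp add: image_image flip: summable_words_eq_UN)
qed

definition invariant_idem_prob :: "(nat \<Rightarrow> 'a::metric_space \<Rightarrow> 'a) \<Rightarrow> (nat \<Rightarrow> real)
    \<Rightarrow> ('a \<Rightarrow> real) \<Rightarrow> real" where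
  "invariant_idem_prob \<phi> q =
     idem_sup (summable_words q) (word_weight q) (\<lambda>w. idem_dirac (coding_map \<phi> w))"

section \<open>The operator \<open>M\<^sub>\<phi>\<^sub>,\<^sub>q\<close>\<close>

locale idem_ifs =
  fixes \<phi> :: "nat \<Rightarrow> 'a::metric_space \<Rightarrow> 'a" and q :: "nat \<Rightarrow> real" and \<gamma> :: real
  assumes compact_space: "compact (UNIV :: 'a set)"
    and \<gamma>: "0 < \<gamma>" "\<gamma> < 1"
    and contraction: "\<And>j x y. dist (\<phi> j x) (\<phi> j y) \<le> \<gamma> * dist x y"
    and q_nonpos: "\<And>j. q j \<le> 0"
    and q_sup: "(SUP j. q j) = 0"
begin

lemma bounded_space: "bounded (UNIV :: 'a set)"
  using compact_space by (rule compact_imp_bounded)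

lemma lipschitz_on_\<phi>: "\<gamma>-lipschitz_on UNIV (\<phi> j)"
  using contraction \<gamma> by (intro lipschitz_onI) auto

lemma continuous_on_\<phi>: "continuous_on UNIV (\<phi> j)"
  using lipschitz_on_\<phi> by (rule lipschitz_on_continuous_on)

lemma continuous_on_comp_\<phi>: "continuous_on UNIV f \<Longrightarrow> continuous_on UNIV (f \<circ> \<phi> j)"
  using continuous_on_compose[OF continuous_on_\<phi>] continuous_on_subset by blast

lemma M_op_eq_idem_sup: "M_op \<phi> q \<mu> = idem_sup UNIV q (\<lambda>j. idem_pushforward (\<phi> j) \<mu>)"
  by (rule ext) (simp add: M_op_def idem_sup_def idem_pushforward_def continuous_on_comp_\<phi>)

lemma M_op_in_idem_prob: "\<mu> \<in> idem_prob \<Longrightarrow> M_op \<phi> q \<mu> \<in> idem_prob"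
  unfolding M_op_eq_idem_sup
  by (rule idem_sup_in_idem_prob)
    (simp_all add: compact_space q_nonpos q_sup idem_pushforward_in_idem_prob continuous_on_\<phi>)

lemma d_lip_M_op_le:
  assumes \<mu>\<nu>: "\<mu> \<in> idem_prob" "\<nu> \<in> idem_prob" and a: "0 \<le> a"
  shows "d_lip a (M_op \<phi> q \<mu>) (M_op \<phi> q \<nu>) \<le> d_lip (\<gamma> * a) \<mu> \<nu>"
proof (rule d_lip_le[OF a])
  fix g :: "'a \<Rightarrow> real"
  assume g: "a-lipschitz_on UNIV g"
  have cont: "continuous_on UNIV g"
    using g by (rule lipschitz_on_continuous_on)
  have "(a * \<gamma>)-lipschitz_on UNIV (g \<circ> \<phi> j)" for j
    using lipschitz_on_\<phi> lipschitz_on_subset[OF g subset_UNIV] by (rule lipschitz_on_compose)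
  then have comp: "(\<gamma> * a)-lipschitz_on UNIV (g \<circ> \<phi> j)" for j
    by (simp add: mult.commute)
  have bdd: "bdd_above (range (\<lambda>j. q j + m (g \<circ> \<phi> j)))" if "m \<in> idem_prob" for m
    using idem_sup_bdd_above[OF compact_space cont, of UNIV q "\<lambda>j. idem_pushforward (\<phi> j) m"]
      q_nonpos idem_pushforward_in_idem_prob[OF continuous_on_\<phi> that]
    by (simp add: idem_pushforward_def cont)
  have "\<bar>(SUP j. q j + \<mu> (g \<circ> \<phi> j)) - (SUP j. q j + \<nu> (g \<circ> \<phi> j))\<bar> \<le> d_lip (\<gamma> * a) \<mu> \<nu>"
    using abs_diff_le_d_lip[OF bounded_space \<mu>\<nu> comp]
    by (intro abs_cSUP_diff_le bdd \<mu>\<nu>) simp_all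
  then show "\<bar>M_op \<phi> q \<mu> g - M_op \<phi> q \<nu> g\<bar> \<le> d_lip (\<gamma> * a) \<mu> \<nu>"
    by (simp add: M_op_def cont)
qed

lemma comp_word_dist_le: "dist (comp_word \<phi> w n x) (comp_word \<phi> w n y) \<le> \<gamma> ^ n * dist x y"
proof (induction n arbitrary: w)
  case (Suc n)
  have "dist (comp_word \<phi> w (Suc n) x) (comp_word \<phi> w (Suc n) y)
      \<le> \<gamma> * dist (comp_word \<phi> (\<lambda>k. w (Suc k)) n x) (comp_word \<phi> (\<lambda>k. w (Suc k)) n y)"
    by (simp add: contraction)
  also have "\<dots> \<le> \<gamma> * (\<gamma> ^ n * dist x y)"
    using Suc \<gamma> by (intro mult_left_mono) simp_all
  finally show ?case
    by simp
qed simp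

lemma comp_word_dist_tail_le:
  assumes "n \<le> m"
  shows "dist (comp_word \<phi> w m x) (comp_word \<phi> w n y) \<le> \<gamma> ^ n * diameter (UNIV :: 'a set)"
proof -
  have "comp_word \<phi> w m x = comp_word \<phi> w n (comp_word \<phi> (\<lambda>k. w (k + n)) (m - n) x)"
    using comp_word_add[of \<phi> w n "m - n" x] assms by simp
  then have "dist (comp_word \<phi> w m x) (comp_word \<phi> w n y)
      \<le> \<gamma> ^ n * dist (comp_word \<phi> (\<lambda>k. w (k + n)) (m - n) x) y"
    by (simp add: comp_word_dist_le)
  also have "\<dots> \<le> \<gamma> ^ n * diameter (UNIV :: 'a set)"
    using diameter_bounded_bound[OF bounded_space] \<gamma> by (intro mult_left_mono) simp_all
  finally show ?thesis .
qed

lemma comp_word_Cauchy: "Cauchy (\<lambda>n. comp_word \<phi> w n x)"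
proof (rule metric_CauchyI)
  fix e :: real
  assume e: "0 < e"
  define D where "D = diameter (UNIV :: 'a set)"
  have D: "0 \<le> D"
    unfolding D_def using bounded_space by (rule diameter_ge_0)
  obtain N where N: "\<gamma> ^ N < e / (D + 1)"
    using real_arch_pow_inv[of "e / (D + 1)" \<gamma>] e D \<gamma> by auto
  have "\<gamma> ^ N * D \<le> \<gamma> ^ N * (D + 1)"
    using \<gamma> by simp
  also have "\<dots> < e"
    using N D by (simp add: field_simps)
  finally have small: "\<gamma> ^ N * D < e" .
  have close: "dist (comp_word \<phi> w m x) (comp_word \<phi> w n x) < e" if "N \<le> n" "n \<le> m" for m n
  proof -
    have "dist (comp_word \<phi> w m x) (comp_word \<phi> w n x) \<le> \<gamma> ^ n * D"
      unfolding D_def using that(2) by (rule comp_word_dist_tail_le)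
    also have "\<dots> \<le> \<gamma> ^ N * D"
      using that(1) \<gamma> D by (intro mult_right_mono power_decreasing) simp_all
    finally show ?thesis
      using small by simp
  qed
  show "\<exists>M. \<forall>m\<ge>M. \<forall>n\<ge>M. dist (comp_word \<phi> w m x) (comp_word \<phi> w n x) < e"
    by (metis close dist_commute nle_le)
qed

lemma comp_word_LIMSEQ: "(\<lambda>n. comp_word \<phi> w n undefined) \<longlonglongrightarrow> coding_map \<phi> w"
proof -
  have "complete (UNIV :: 'a set)"
    using compact_space by (rule compact_imp_complete)
  then have "convergent (\<lambda>n. comp_word \<phi> w n undefined)"
    using comp_word_Cauchy unfolding complete_def convergent_def by blast
  then show ?thesis
    unfolding coding_map_def by (rule convergent_LIMSEQ_iff[THEN iffD1])
qed

lemma coding_map_case_nat: "coding_map \<phi> (case_nat j w) = \<phi> j (coding_map \<phi> w)"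
proof (rule LIMSEQ_unique)
  show "(\<lambda>n. comp_word \<phi> (case_nat j w) (Suc n) undefined) \<longlonglongrightarrow> coding_map \<phi> (case_nat j w)"
    using comp_word_LIMSEQ by (rule LIMSEQ_Suc)
  have "isCont (\<phi> j) (coding_map \<phi> w)"
    using continuous_on_\<phi> continuous_on_eq_continuous_at by blast
  from isCont_tendsto_compose[OF this comp_word_LIMSEQ]
  show "(\<lambda>n. comp_word \<phi> (case_nat j w) (Suc n) undefined) \<longlonglongrightarrow> \<phi> j (coding_map \<phi> w)"
    by simp
qed

lemma invariant_idem_prob_in_idem_prob: "invariant_idem_prob \<phi> q \<in> idem_prob"
  unfolding invariant_idem_prob_def
  by (rule idem_sup_in_idem_prob)
    (simp_all add: compact_space SUP_word_weight q_nonpos q_sup word_weight_nonpos idem_dirac_in_idem_prob)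

lemma M_op_invariant_idem_prob: "M_op \<phi> q (invariant_idem_prob \<phi> q) = invariant_idem_prob \<phi> q"
proof (rule idem_prob_eqI[OF M_op_in_idem_prob[OF invariant_idem_prob_in_idem_prob]
      invariant_idem_prob_in_idem_prob])
  fix f :: "'a \<Rightarrow> real"
  assume f: "continuous_on UNIV f"
  let ?W = "summable_words q" and ?\<nu> = "invariant_idem_prob \<phi> q"
  let ?h = "\<lambda>w. word_weight q w + f (coding_map \<phi> w)"
  obtain B where B: "\<And>x. \<bar>f x\<bar> \<le> B"
    using compact_space_continuous_bounded[OF compact_space f] by blast
  have h_le: "word_weight q w + f x \<le> B" if "w \<in> ?W" for w x
    using word_weight_nonpos[OF q_nonpos that] B[of x] by simp
  have "M_op \<phi> q ?\<nu> f = (SUP j. q j + (SUP w\<in>?W. word_weight q w + f (\<phi> j (coding_map \<phi> w))))"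
    using f continuous_on_comp_\<phi>[OF f]
    by (simp add: M_op_def invariant_idem_prob_def idem_sup_def idem_dirac_def)
  also have "\<dots> = (SUP j. SUP w\<in>?W. ?h (case_nat j w))"
  proof (rule SUP_cong)
    fix j :: nat
    have "q j + (SUP w\<in>?W. word_weight q w + f (\<phi> j (coding_map \<phi> w)))
        = (SUP w\<in>?W. q j + (word_weight q w + f (\<phi> j (coding_map \<phi> w))))"
      using h_le SUP_word_weight(1)[OF q_nonpos q_sup] by (intro Sup_add_eq[symmetric] bdd_aboveI2)
    also have "\<dots> = (SUP w\<in>?W. ?h (case_nat j w))"
      by (rule SUP_cong) (simp_all add: word_weight_case_nat coding_map_case_nat)
    finally show "q j + (SUP w\<in>?W. word_weight q w + f (\<phi> j (coding_map \<phi> w)))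
        = (SUP w\<in>?W. ?h (case_nat j w))" .
  qed simp
  also have "\<dots> = (SUP w\<in>?W. ?h w)"
    using SUP_word_weight(1)[OF q_nonpos q_sup] h_le by (rule SUP_case_nat_summable_words)
  also have "\<dots> = ?\<nu> f"
    using f by (simp add: invariant_idem_prob_def idem_sup_def idem_dirac_def)
  finally show "M_op \<phi> q ?\<nu> f = ?\<nu> f" .
qed

end

theorem theorem3p3:
  fixes \<phi> :: "nat \<Rightarrow> 'a::metric_space \<Rightarrow> 'a" and q :: "nat \<Rightarrow> real"
    and \<gamma> \<tau> :: real
  assumes X_compact: "compact (UNIV :: 'a set)"
    and \<gamma>: "0 < \<gamma>" "\<gamma> < 1"
    and \<phi>_contr: "\<And>j x1 x2. dist (\<phi> j x1) (\<phi> j x2) \<le> \<gamma> * dist x1 x2"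
    and q_nonpos: "\<And>j. q j \<le> 0"
    and q_sup: "(SUP j. q j) = 0"
    and \<tau>: "\<gamma> < \<tau>" "\<tau> < 1"
  shows "(\<forall>\<mu>\<in>idem_prob. \<forall>\<nu>\<in>idem_prob.
            d_tilde \<gamma> \<tau> (M_op \<phi> q \<mu>) (M_op \<phi> q \<nu>) \<le> \<gamma> / \<tau> * d_tilde \<gamma> \<tau> \<mu> \<nu>)
       \<and> \<gamma> / \<tau> < 1
       \<and> (\<exists>!\<nu>. \<nu> \<in> idem_prob \<and> M_op \<phi> q \<nu> = \<nu>)
       \<and> (\<forall>\<nu>\<in>idem_prob. M_op \<phi> q \<nu> = \<nu> \<longrightarrow>
            (\<forall>\<mu>\<in>idem_prob. (\<lambda>n. d_tilde \<gamma> \<tau> ((M_op \<phi> q ^^ n) \<mu>) \<nu>) \<longlonglongrightarrow> 0))"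
proof -
  interpret idem_ifs \<phi> q \<gamma>
    using X_compact \<gamma> \<phi>_contr q_nonpos q_sup by unfold_locales
  have \<tau>_pos: "0 < \<tau>"
    using \<gamma>(1) \<tau>(1) by linarith
  have ratio: "0 \<le> \<gamma> / \<tau>" "\<gamma> / \<tau> < 1"
    using \<gamma>(1) \<tau> \<tau>_pos by simp_all
  have contracts: "d_tilde \<gamma> \<tau> (M_op \<phi> q \<mu>) (M_op \<phi> q \<nu>) \<le> \<gamma> / \<tau> * d_tilde \<gamma> \<tau> \<mu> \<nu>"
    if "\<mu> \<in> idem_prob" "\<nu> \<in> idem_prob" for \<mu> \<nu>
    using bounded_space that M_op_in_idem_prob[OF that(1)] M_op_in_idem_prob[OF that(2)]
      \<gamma>(1) \<tau>_pos \<tau>(2)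
    by (rule d_tilde_contraction) (simp add: d_lip_M_op_le that)
  have nonneg: "0 \<le> d_tilde \<gamma> \<tau> \<mu> \<nu>" if "\<mu> \<in> idem_prob" "\<nu> \<in> idem_prob"
    for \<mu> \<nu> :: "('a \<Rightarrow> real) \<Rightarrow> real"
    using bounded_space that \<gamma>(1) less_imp_le[OF \<tau>_pos] by (rule d_tilde_nonneg)
  have separates: "\<mu> = \<nu>"
    if "\<mu> \<in> idem_prob" "\<nu> \<in> idem_prob" "d_tilde \<gamma> \<tau> \<mu> \<nu> = 0"
    for \<mu> \<nu> :: "('a \<Rightarrow> real) \<Rightarrow> real"
    using compact_space that(1,2) \<gamma> \<tau>_pos \<tau>(2) that(3) by (rule d_tilde_eq_0_imp_eq)
  interpret contraction_on idem_prob "d_tilde \<gamma> \<tau>" "M_op \<phi> q" "\<gamma> / \<tau>"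
    using M_op_in_idem_prob nonneg separates contracts ratio by unfold_locales
  show ?thesis
  proof (intro conjI ballI impI)
    show "\<exists>!\<nu>. \<nu> \<in> idem_prob \<and> M_op \<phi> q \<nu> = \<nu>"
      using invariant_idem_prob_in_idem_prob M_op_invariant_idem_prob fixpoint_unique
      by (intro ex1I[of _ "invariant_idem_prob \<phi> q"]) auto
  qed (blast intro: contracts ratio(2) iterates_tendsto_fixpoint)+
qed

end
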